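(* Let $(p_{ij})_{i,j\in\{0,1\}}$ be a transition matrix with all $p_{ij}\in(0,1)$ and $p_{ij}\ne\tfrac12$ for some $(i,j)$; for $i\in\{0,1\}$ let $I_n^i\sim B(n,p_{i0})$. Define for $n\ge2$ $$\eta_n^{i,1}=\frac1H\Big(n\log n-\mathbb E\big[I_n^i\log I_n^i+(n-I_n^i)\log(n-I_n^i)\big]\Big)+\pi_{1-i}\frac{H_{1-i}-H_i}{H}n+\frac{H_1-H_0}{(p_{01}+p_{10})H}p_{i0}p_{i1}^{n-1}n,$$ and $\eta_n^{i,2}=n-\eta_n^{i,1}$. Then for both $i\in\{0,1\}$, $\eta_n^{i,2}=O(\log n)$ as $n\to\infty$.
   Context: $0\log0:=0$. $\pi_0=p_{10}/(p_{01}+p_{10})$, $\pi_1=p_{01}/(p_{01}+p_{10})$, $H_i=-\sum_jp_{ij}\log p_{ij}$, $H=\pi_0H_0+\pi_1H_1$. *)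

theory Defs
  imports "HOL-Probability.Probability" "HOL-Library.Landau_Symbols"
begin

text \<open>Transition matrix p i j, i,j in {0,1}. Logarithms are natural (base cancels anyway).
  Convention 0 log 0 = 0.\<close>

definition xlogx :: "real \<Rightarrow> real" where
  "xlogx x = (if x = 0 then 0 else x * ln x)"

definition stat_pi :: "(nat \<Rightarrow> nat \<Rightarrow> real) \<Rightarrow> nat \<Rightarrow> real" where
  "stat_pi p i = (if i = 0 then p 1 0 / (p 0 1 + p 1 0) else p 0 1 / (p 0 1 + p 1 0))"

definition row_entropy :: "(nat \<Rightarrow> nat \<Rightarrow> real) \<Rightarrow> nat \<Rightarrow> real" where
  "row_entropy p i = - (\<Sum>j<2. xlogx (p i j))"

definition entropy_rate :: "(nat \<Rightarrow> nat \<Rightarrow> real) \<Rightarrow> real" where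
  "entropy_rate p = stat_pi p 0 * row_entropy p 0 + stat_pi p 1 * row_entropy p 1"

definition eta1 :: "(nat \<Rightarrow> nat \<Rightarrow> real) \<Rightarrow> nat \<Rightarrow> nat \<Rightarrow> real" where
  "eta1 p i n =
     (1 / entropy_rate p) *
       (xlogx (real n) -
        measure_pmf.expectation (binomial_pmf n (p i 0))
          (\<lambda>I. xlogx (real I) + xlogx (real n - real I)))
     + stat_pi p (1 - i) * (row_entropy p (1 - i) - row_entropy p i) / entropy_rate p * real n
     + (row_entropy p 1 - row_entropy p 0) / ((p 0 1 + p 1 0) * entropy_rate p)
         * p i 0 * p i 1 ^ (n - 1) * real n"

definition eta2 :: "(nat \<Rightarrow> nat \<Rightarrow> real) \<Rightarrow> nat \<Rightarrow> nat \<Rightarrow> real" where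
  "eta2 p i n = real n - eta1 p i n"

end

theory Submission
  imports Defs "HOL-Real_Asymp.Real_Asymp"
begin

text \<open>
  For a > 0 the function x log x lies between its tangent at a and that tangent plus (x - a)^2 / a.
  Taking expectations at a = E X gives a log a \<le> E[X log X] \<le> a log a + Var X / a. For
  I ~ B(n, q) applied to I and n - I, with means n q, n (1 - q) and variance n q (1 - q), this
  pins E[I log I + (n - I) log (n - I)] between n log n - n H_i and that value plus 1.
  Since H = H_i + \<pi>_{1-i} (H_{1-i} - H_i), the terms of \<eta>^{i,2} linear in n cancel, and
  what is left is this bounded defect divided by H plus a multiple of n p_{i1}^{n-1}, which
  tends to 0. So \<eta>^{i,2} is even O(1).
\<close>

lemma binomial_sum_times_index:
  fixes q r :: real
  shows "(\<Sum>k\<le>Suc m. real k * f k * (real (Suc m choose k) * q ^ k * r ^ (Suc m - k)))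
       = real (Suc m) * q * (\<Sum>j\<le>m. f (Suc j) * (real (m choose j) * q ^ j * r ^ (m - j)))"
proof -
  have summand: "real (Suc j) * f (Suc j) * (real (Suc m choose Suc j) * q ^ Suc j * r ^ (Suc m - Suc j))
      = real (Suc m) * q * (f (Suc j) * (real (m choose j) * q ^ j * r ^ (m - j)))" for j
  proof -
    have "real (Suc j) * real (Suc m choose Suc j) = real (Suc m) * real (m choose j)"
      by (metis Suc_times_binomial of_nat_mult)
    then show ?thesis by (simp add: ac_simps del: binomial_Suc_Suc of_nat_Suc)
  qed
  have "(\<Sum>k\<le>Suc m. real k * f k * (real (Suc m choose k) * q ^ k * r ^ (Suc m - k)))
      = (\<Sum>j\<le>m. real (Suc j) * f (Suc j) * (real (Suc m choose Suc j) * q ^ Suc j * r ^ (Suc m - Suc j)))"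
    by (subst sum.atMost_Suc_shift) simp
  also have "\<dots> = (\<Sum>j\<le>m. real (Suc m) * q * (f (Suc j) * (real (m choose j) * q ^ j * r ^ (m - j))))"
    by (rule sum.cong[OF refl summand])
  finally show ?thesis by (simp add: sum_distrib_left)
qed

lemma binomial_sum_index:
  fixes q :: real
  shows "(\<Sum>k\<le>n. real k * (real (n choose k) * q ^ k * (1 - q) ^ (n - k))) = real n * q"
  using binomial_sum_times_index[of "\<lambda>_. 1" _ q "1 - q"]
  by (cases n) (simp_all add: binomial_ring[of q "1 - q", simplified])

lemma binomial_sum_index_pred:
  fixes q :: real
  shows "(\<Sum>k\<le>n. real k * (real k - 1) * (real (n choose k) * q ^ k * (1 - q) ^ (n - k)))
       = real n * (real n - 1) * q ^ 2"
  using binomial_sum_times_index[of "\<lambda>k. real k - 1" _ q "1 - q"] binomial_sum_index[of _ q]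
  by (cases n) (simp_all add: power2_eq_square)

lemma xlogx_tangent_bounds:
  fixes a x :: real
  assumes "a > 0" "x \<ge> 0"
  shows "x * ln a + x - a \<le> xlogx x" and "xlogx x \<le> x * ln a + x - a + (x - a)\<^sup>2 / a"
proof -
  have "x * ln a + x - a \<le> xlogx x \<and> xlogx x \<le> x * ln a + x - a + (x - a)\<^sup>2 / a"
  proof (cases "x = 0")
    case True
    then show ?thesis using assms by (simp add: xlogx_def power2_eq_square)
  next
    case False
    with assms have x: "x > 0" by simp
    have "x * ln (a / x) \<le> x * (a / x - 1)" "x * ln (x / a) \<le> x * (x / a - 1)"
      using x assms by (intro mult_left_mono ln_le_minus_one; simp)+
    then have "x * ln a - x * ln x \<le> a - x" "x * ln x - x * ln a \<le> x\<^sup>2 / a - x"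
      using x assms by (simp_all add: ln_div right_diff_distrib power2_eq_square)
    moreover have "(x - a)\<^sup>2 / a = x\<^sup>2 / a - 2 * x + a"
      using assms by (simp add: power2_eq_square field_simps)
    ultimately show ?thesis
      using False by (simp add: xlogx_def)
  qed
  then show "x * ln a + x - a \<le> xlogx x" "xlogx x \<le> x * ln a + x - a + (x - a)\<^sup>2 / a"
    by auto
qed

lemma expectation_xlogx_bounds:
  fixes M :: "'a pmf" and X :: "'a \<Rightarrow> real"
  assumes fin: "finite (set_pmf M)" and nonneg: "\<And>x. x \<in> set_pmf M \<Longrightarrow> X x \<ge> 0"
    and mean: "measure_pmf.expectation M X = a" and a: "a > 0"
  shows "xlogx a \<le> measure_pmf.expectation M (\<lambda>x. xlogx (X x))"
    and "measure_pmf.expectation M (\<lambda>x. xlogx (X x))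
           \<le> xlogx a + measure_pmf.expectation M (\<lambda>x. (X x - a)\<^sup>2) / a"
proof -
  have int: "integrable M f" for f :: "'a \<Rightarrow> real"
    using fin by (rule integrable_measure_pmf_finite)
  have "xlogx a = measure_pmf.expectation M (\<lambda>x. X x * ln a + X x - a)"
    using mean a by (simp add: int xlogx_def)
  also have "\<dots> \<le> measure_pmf.expectation M (\<lambda>x. xlogx (X x))"
    using xlogx_tangent_bounds(1)[OF a nonneg]
    by (intro integral_mono_AE int) (simp add: AE_measure_pmf_iff)
  finally show "xlogx a \<le> measure_pmf.expectation M (\<lambda>x. xlogx (X x))" .
  have "measure_pmf.expectation M (\<lambda>x. xlogx (X x))
      \<le> measure_pmf.expectation M (\<lambda>x. X x * ln a + X x - a + (X x - a)\<^sup>2 / a)"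
    using xlogx_tangent_bounds(2)[OF a nonneg]
    by (intro integral_mono_AE int) (simp add: AE_measure_pmf_iff)
  also have "\<dots> = xlogx a + measure_pmf.expectation M (\<lambda>x. (X x - a)\<^sup>2) / a"
    using mean a by (simp add: int xlogx_def)
  finally show "measure_pmf.expectation M (\<lambda>x. xlogx (X x))
           \<le> xlogx a + measure_pmf.expectation M (\<lambda>x. (X x - a)\<^sup>2) / a" .
qed

lemma expectation_binomial_pmf_real:
  assumes "q \<in> {0..1}"
  shows "measure_pmf.expectation (binomial_pmf n q) real = real n * q"
  using assms binomial_sum_index[of n q]
  by (simp add: expectation_binomial_pmf' mult.commute)

lemma expectation_binomial_pmf_sq_deviation:
  assumes q: "q \<in> {0..1}"
  shows "measure_pmf.expectation (binomial_pmf n q) (\<lambda>k. (real k - real n * q)\<^sup>2)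
       = real n * q * (1 - q)"
proof -
  have pred: "measure_pmf.expectation (binomial_pmf n q) (\<lambda>k. real k * (real k - 1))
      = real n * (real n - 1) * q\<^sup>2"
    using q binomial_sum_index_pred[of n q] by (simp add: expectation_binomial_pmf' mult.commute)
  have "(\<lambda>k. (real k - real n * q)\<^sup>2)
      = (\<lambda>k. real k * (real k - 1) + (1 - 2 * real n * q) * real k + (real n * q)\<^sup>2)"
    by (simp add: fun_eq_iff power2_eq_square algebra_simps)
  then show ?thesis
    using q pred expectation_binomial_pmf_real[OF q, of n]
    by (simp add: power2_eq_square algebra_simps)
qed

lemma binomial_expectation_xlogx_bounds:
  fixes n :: nat and q :: real
  assumes q: "0 < q" "q < 1"
  defines "E \<equiv> measure_pmf.expectation (binomial_pmf n q)
                  (\<lambda>k. xlogx (real k) + xlogx (real n - real k))"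
  shows "xlogx (real n * q) + xlogx (real n * (1 - q)) \<le> E"
    and "E \<le> xlogx (real n * q) + xlogx (real n * (1 - q)) + 1"
proof -
  have "xlogx (real n * q) + xlogx (real n * (1 - q)) \<le> E
      \<and> E \<le> xlogx (real n * q) + xlogx (real n * (1 - q)) + 1"
  proof (cases "n = 0")
    case True
    then show ?thesis using q by (simp add: E_def binomial_pmf_0 xlogx_def)
  next
    case False
    let ?M = "binomial_pmf n q"
    have qI: "q \<in> {0..1}" using q by simp
    have fin: "finite (set_pmf ?M)" and supp: "set_pmf ?M = {..n}" using q by auto
    have a: "real n * q > 0" and b: "real n * (1 - q) > 0" using False q by auto
    have mean_a: "measure_pmf.expectation ?M real = real n * q"
      by (rule expectation_binomial_pmf_real[OF qI])
    have mean_b: "measure_pmf.expectation ?M (\<lambda>k. real n - real k) = real n * (1 - q)"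
      using qI mean_a by (simp add: algebra_simps)
    have var_a:
      "measure_pmf.expectation ?M (\<lambda>k. (real k - real n * q)\<^sup>2) / (real n * q) = 1 - q"
      using False q unfolding expectation_binomial_pmf_sq_deviation[OF qI] by simp
    have "(\<lambda>k. (real n - real k - real n * (1 - q))\<^sup>2) = (\<lambda>k. (real k - real n * q)\<^sup>2)"
      by (simp add: fun_eq_iff power2_eq_square algebra_simps)
    then have var_b: "measure_pmf.expectation ?M (\<lambda>k. (real n - real k - real n * (1 - q))\<^sup>2)
        / (real n * (1 - q)) = q"
      using False q by (simp add: expectation_binomial_pmf_sq_deviation[OF qI])
    note A = expectation_xlogx_bounds[OF fin _ mean_a a, unfolded var_a]
    note B = expectation_xlogx_bounds[OF fin _ mean_b b, unfolded var_b]
    have "E = measure_pmf.expectation ?M (\<lambda>k. xlogx (real k))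
        + measure_pmf.expectation ?M (\<lambda>k. xlogx (real n - real k))"
      unfolding E_def using qI by (simp add: integrable_binomial_pmf)
    with A B supp show ?thesis by force
  qed
  then show "xlogx (real n * q) + xlogx (real n * (1 - q)) \<le> E"
    and "E \<le> xlogx (real n * q) + xlogx (real n * (1 - q)) + 1" by auto
qed

lemma xlogx_mult:
  assumes "x \<ge> 0" "y \<ge> 0"
  shows "xlogx (x * y) = y * xlogx x + x * xlogx y"
  using assms by (simp add: xlogx_def ln_mult algebra_simps)

lemma xlogx_neg:
  assumes "0 < x" "x < 1"
  shows "xlogx x < 0"
  using assms by (simp add: xlogx_def mult_pos_neg)

lemma row_entropy_eq: "row_entropy p i = - (xlogx (p i 0) + xlogx (p i 1))"
  by (simp add: row_entropy_def numeral_2_eq_2)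

lemma stat_pi_sum:
  assumes "p 0 1 + p 1 0 \<noteq> 0"
  shows "stat_pi p 0 + stat_pi p 1 = 1"
  using assms by (simp add: stat_pi_def add_divide_distrib[symmetric] add.commute)

lemma entropy_rate_eq:
  assumes "p 0 1 + p 1 0 \<noteq> 0" "i < 2"
  shows "entropy_rate p
       = row_entropy p i + stat_pi p (1 - i) * (row_entropy p (1 - i) - row_entropy p i)"
  using stat_pi_sum[OF assms(1)] assms(2)
  by (auto simp: entropy_rate_def less_2_cases_iff algebra_simps)
     (metis distrib_left mult.commute mult_1)+

lemma entropy_rate_pos:
  assumes "\<And>i j. i < 2 \<Longrightarrow> j < 2 \<Longrightarrow> 0 < p i j \<and> p i j < 1"
  shows "entropy_rate p > 0"
proof -
  have "row_entropy p i > 0" if "i < 2" for i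
    using xlogx_neg[of "p i 0"] xlogx_neg[of "p i 1"] assms[OF that, of 0] assms[OF that, of 1]
    by (simp add: row_entropy_eq)
  moreover have "stat_pi p i > 0" for i
    using assms[of 0 1] assms[of 1 0] by (simp add: stat_pi_def)
  ultimately show ?thesis
    unfolding entropy_rate_def by (intro add_pos_pos mult_pos_pos) auto
qed

lemma eta2_eq:
  assumes "entropy_rate p \<noteq> 0" "p 0 1 + p 1 0 \<noteq> 0" "i < 2"
  shows "eta2 p i n =
      (measure_pmf.expectation (binomial_pmf n (p i 0))
         (\<lambda>k. xlogx (real k) + xlogx (real n - real k))
         - xlogx (real n) + real n * row_entropy p i) / entropy_rate p
      - (row_entropy p 1 - row_entropy p 0) / ((p 0 1 + p 1 0) * entropy_rate p)
          * p i 0 * p i 1 ^ (n - 1) * real n"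
proof -
  define c where "c = stat_pi p (1 - i) * (row_entropy p (1 - i) - row_entropy p i)"
  have "real n * row_entropy p i = real n * entropy_rate p - c * real n"
    unfolding c_def by (subst entropy_rate_eq[OF assms(2,3)]) (simp add: algebra_simps)
  with assms(1) show ?thesis
    unfolding eta2_def eta1_def c_def[symmetric] by (simp add: field_simps)
qed

lemma tendsto_times_power_pred:
  fixes r :: real
  assumes "\<bar>r\<bar> < 1"
  shows "(\<lambda>n. real n * r ^ (n - 1)) \<longlonglongrightarrow> 0"
proof (rule LIMSEQ_imp_Suc)
  have "(\<lambda>n. real n * r ^ n + r ^ n) \<longlonglongrightarrow> 0 + 0"
    using assms by (intro tendsto_add powser_times_n_limit_0 LIMSEQ_power_zero) auto
  then show "(\<lambda>n. real (Suc n) * r ^ (Suc n - 1)) \<longlonglongrightarrow> 0"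
    by (simp add: algebra_simps)
qed

lemma eta2_in_bigo_1:
  assumes range: "\<And>i j. i < 2 \<Longrightarrow> j < 2 \<Longrightarrow> 0 < p i j \<and> p i j < 1"
    and stoch: "p i 0 + p i 1 = 1" and i: "i < 2"
  shows "eta2 p i \<in> O(\<lambda>_. 1)"
proof -
  define q where "q = p i 0"
  have q: "0 < q" "q < 1" and r: "p i 1 = 1 - q"
    using range[OF i, of 0] stoch by (auto simp: q_def)
  define H where "H = entropy_rate p"
  have H: "H > 0"
    unfolding H_def using range by (rule entropy_rate_pos)
  have flow: "p 0 1 + p 1 0 \<noteq> 0"
    using range[of 0 1] range[of 1 0] by simp
  define E where
    "E n = measure_pmf.expectation (binomial_pmf n q) (\<lambda>k. xlogx (real k) + xlogx (real n - real k))"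
    for n
  define C where "C = (row_entropy p 1 - row_entropy p 0) / ((p 0 1 + p 1 0) * H)"
  define A where "A n = (E n - xlogx (real n) + real n * row_entropy p i) / H" for n
  define B where "B n = C * q * (real n * (1 - q) ^ (n - 1))" for n
  have "eta2 p i = (\<lambda>n. A n - B n)"
    using eta2_eq[OF _ flow i, unfolded r, folded q_def H_def] H
    by (simp add: fun_eq_iff A_def B_def C_def E_def mult_ac)
  moreover have "A \<in> O(\<lambda>_. 1)"
  proof (rule bigoI[of _ "1 / H"], intro always_eventually allI)
    fix n
    have "xlogx (real n * q) = q * xlogx (real n) + real n * xlogx q"
      "xlogx (real n * (1 - q)) = (1 - q) * xlogx (real n) + real n * xlogx (1 - q)"
      using q by (simp_all add: xlogx_mult)
    moreover have Hi: "row_entropy p i = - (xlogx q + xlogx (1 - q))"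
      using r by (simp add: row_entropy_eq q_def)
    ultimately have "xlogx (real n * q) + xlogx (real n * (1 - q))
        = xlogx (real n) - real n * row_entropy p i"
      unfolding Hi by (simp add: algebra_simps)
    then have "0 \<le> E n - xlogx (real n) + real n * row_entropy p i"
      "E n - xlogx (real n) + real n * row_entropy p i \<le> 1"
      using binomial_expectation_xlogx_bounds[OF q, of n] unfolding E_def by linarith+
    then show "norm (A n) \<le> 1 / H * norm (1::real)"
      using H by (simp add: A_def divide_right_mono)
  qed
  moreover have "B \<in> O(\<lambda>_. 1)"
  proof (rule bigoI_tendsto[where c = 0])
    have "(\<lambda>n. real n * (1 - q) ^ (n - 1)) \<longlonglongrightarrow> 0"
      using q by (intro tendsto_times_power_pred) auto
    then show "(\<lambda>n. B n / 1) \<longlonglongrightarrow> 0"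
      unfolding div_by_1 B_def by (rule tendsto_mult_right_zero)
  qed simp
  ultimately show ?thesis
    by (simp only: sum_in_bigo)
qed

theorem lemma6p5:
  fixes p :: "nat \<Rightarrow> nat \<Rightarrow> real"
  assumes range: "\<And>i j. i < 2 \<Longrightarrow> j < 2 \<Longrightarrow> 0 < p i j \<and> p i j < 1"
    and stoch: "\<And>i. i < 2 \<Longrightarrow> p i 0 + p i 1 = 1"
    and nonuniform: "\<exists>i<2. \<exists>j<2. p i j \<noteq> 1/2"
  shows "\<forall>i<2. (\<lambda>n. eta2 p i n) \<in> O(\<lambda>n. ln (real n))"
proof (intro allI impI)
  fix i :: nat
  assume "i < 2"
  have "(\<lambda>_. 1) \<in> O(\<lambda>n. ln (real n))"
    by real_asymp
  with eta2_in_bigo_1[where p = p and i = i, OF range stoch[OF \<open>i < 2\<close>] \<open>i < 2\<close>]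
  show "(\<lambda>n. eta2 p i n) \<in> O(\<lambda>n. ln (real n))"
    by (rule landau_o.big_trans)
qed

end
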